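(* For every integer $m\geq 0$, $$\text{(i)}\ A_{1,m}=\frac{m(m+1)(m+\lambda)(m+\lambda+1)}{2\lambda+1};\qquad\text{(ii)}\ \widetilde A_{1,m}=\frac{m(m+\lambda)\big(m^2+\lambda m-\frac12\big)}{2\lambda+1}.$$
   Context: Fix $\lambda>-1/2$. Define polynomials $Q_m$ by $Q_0=1$, $Q_1(\mu)=1-\frac{2(\lambda+1)(\lambda+2)}{2\lambda+1}\mu$ and, for $m\geq2$, $$Q_m-Q_{m-1}=\frac{m(2m-1)(2m+\lambda)}{(m-1+\lambda)(2m-2+\lambda)(2m-1+2\lambda)}\big[Q_{m-1}-Q_{m-2}\big]-\frac{2m(2m-1+\lambda)(2m+\lambda)}{2m-1+2\lambda}\,\mu\,Q_{m-1}(\mu).$$ Define $\widetilde Q_m$ by $\widetilde Q_0=1$, $\widetilde Q_1(\mu)=1-\frac{\lambda+1}{2}\mu$ and, for $m\geq2$, $$\widetilde Q_m-\widetilde Q_{m-1}=\frac{(m-1)(2m-1)(2m-1+\lambda)}{(m-1+\lambda)(2m-3+\lambda)(2m-3+2\lambda)}\big[\widetilde Q_{m-1}-\widetilde Q_{m-2}\big]-\frac{(2m-1)(2m-2+\lambda)(2m-1+\lambda)}{2(m-1+\lambda)}\,\mu\,\widetilde Q_{m-1}(\mu).$$ Write $Q_m(\mu)=\sum_{i=0}^m(-1)^iA_{i,m}\mu^i$ and $\widetilde Q_m(\mu)=\sum_{i=0}^m(-1)^i\widetilde A_{i,m}\mu^i$ (so $A_{0,m}=\widetilde A_{0,m}=1$),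 with $A_{i,m}=\widetilde A_{i,m}=0$ for $i>m$. *)

theory Defs
  imports "HOL-Computational_Algebra.Polynomial"
begin

fun Q :: "real \<Rightarrow> nat \<Rightarrow> real poly" where
  "Q lam 0 = 1"
| "Q lam (Suc 0) = [:1, - (2 * (lam + 1) * (lam + 2) / (2 * lam + 1)):]"
| "Q lam (Suc (Suc n)) =
     (let m = real (n + 2) in
      Q lam (Suc n)
      + smult (m * (2*m - 1) * (2*m + lam) / ((m - 1 + lam) * (2*m - 2 + lam) * (2*m - 1 + 2*lam)))
              (Q lam (Suc n) - Q lam n)
      - smult (2 * m * (2*m - 1 + lam) * (2*m + lam) / (2*m - 1 + 2*lam)) (pCons 0 (Q lam (Suc n))))"

fun Qt :: "real \<Rightarrow> nat \<Rightarrow> real poly" where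
  "Qt lam 0 = 1"
| "Qt lam (Suc 0) = [:1, - ((lam + 1) / 2):]"
| "Qt lam (Suc (Suc n)) =
     (let m = real (n + 2) in
      Qt lam (Suc n)
      + smult ((m - 1) * (2*m - 1) * (2*m - 1 + lam) / ((m - 1 + lam) * (2*m - 3 + lam) * (2*m - 3 + 2*lam)))
              (Qt lam (Suc n) - Qt lam n)
      - smult ((2*m - 1) * (2*m - 2 + lam) * (2*m - 1 + lam) / (2 * (m - 1 + lam))) (pCons 0 (Qt lam (Suc n))))"

text \<open>Q_m(mu) = sum_i (-1)^i A_{i,m} mu^i, so A_{i,m} = (-1)^i coeff (Q_m) i.\<close>
definition A :: "real \<Rightarrow> nat \<Rightarrow> nat \<Rightarrow> real" where
  "A lam i m = (-1) ^ i * coeff (Q lam m) i"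

definition At :: "real \<Rightarrow> nat \<Rightarrow> nat \<Rightarrow> real" where
  "At lam i m = (-1) ^ i * coeff (Qt lam m) i"

end

theory Submission
  imports Defs
begin

text \<open>The linear coefficient of \<open>\<mu> Q\<^sub>m\<^sub>-\<^sub>1(\<mu>)\<close> is \<open>Q\<^sub>m\<^sub>-\<^sub>1(0) = 1\<close>, so comparing
  linear coefficients in the recurrence shows that the increments
  \<open>D\<^sub>m = A\<^sub>1\<^sub>,\<^sub>m - A\<^sub>1\<^sub>,\<^sub>m\<^sub>-\<^sub>1\<close> satisfy the first-order recurrence
  \<open>D\<^sub>m = c\<^sub>m D\<^sub>m\<^sub>-\<^sub>1 + d\<^sub>m\<close>. Its solution is
  \<open>D\<^sub>m = 2m(m+\<lambda>)(2m+\<lambda>)/(2\<lambda>+1)\<close>: after cancelling, the recurrence reduces to the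
  factorisation \<open>(2m-1)(m-1) + (2m-1+\<lambda>)(2\<lambda>+1) = (m+\<lambda>)(2m-1+2\<lambda>)\<close>. Summing the
  increments telescopes to the closed form. For \<open>\<tilde>A\<^sub>1\<^sub>,\<^sub>m\<close> the same scheme works with
  \<open>D\<^sub>m = (2m-1)(2m-1+\<lambda>)(2m-1+2\<lambda>)/(2(2\<lambda>+1))\<close> and the factorisation
  \<open>(m-1)(2m-3) + (2m-2+\<lambda>)(2\<lambda>+1) = (m-1+\<lambda>)(2m-1+2\<lambda>)\<close>.\<close>

definition A1_increment :: "real \<Rightarrow> real \<Rightarrow> real" where
  "A1_increment lam m = 2 * m * (m + lam) * (2*m + lam) / (2*lam + 1)"

definition At1_increment :: "real \<Rightarrow> real \<Rightarrow> real" where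
  "At1_increment lam m = (2*m - 1) * (2*m - 1 + lam) * (2*m - 1 + 2*lam) / (2 * (2*lam + 1))"

lemma A1_increment_recurrence:
  fixes lam m :: real
  assumes "lam > - 1 / 2" "m \<ge> 2"
  shows "A1_increment lam m =
      m * (2*m - 1) * (2*m + lam) / ((m - 1 + lam) * (2*m - 2 + lam) * (2*m - 1 + 2*lam))
        * A1_increment lam (m - 1)
      + 2 * m * (2*m - 1 + lam) * (2*m + lam) / (2*m - 1 + 2*lam)"
proof -
  have nz: "m - 1 + lam \<noteq> 0" "2*m - 2 + lam \<noteq> 0" "2*m - 1 + 2*lam \<noteq> 0" "2*lam + 1 \<noteq> 0"
    using assms by linarith+
  show ?thesis
    unfolding A1_increment_def by (simp add: divide_simps nz) (simp add: algebra_simps)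
qed

lemma At1_increment_recurrence:
  fixes lam m :: real
  assumes "lam > - 1 / 2" "m \<ge> 2"
  shows "At1_increment lam m =
      (m - 1) * (2*m - 1) * (2*m - 1 + lam) / ((m - 1 + lam) * (2*m - 3 + lam) * (2*m - 3 + 2*lam))
        * At1_increment lam (m - 1)
      + (2*m - 1) * (2*m - 2 + lam) * (2*m - 1 + lam) / (2 * (m - 1 + lam))"
proof -
  have nz: "m - 1 + lam \<noteq> 0" "2*m - 3 + lam \<noteq> 0" "2*m - 3 + 2*lam \<noteq> 0"
    "2 * (m - 1 + lam) \<noteq> 0" "2 * (2*lam + 1) \<noteq> 0"
    using assms by (simp_all add: ring_distribs)
  show ?thesis
    unfolding At1_increment_def using assms by (simp add: divide_simps nz) (auto simp: algebra_simps)
qed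

lemma coeff_Q_0 [simp]: "coeff (Q lam n) 0 = 1"
  by (induction lam n rule: Q.induct) (simp_all add: Let_def)

lemma coeff_Qt_0 [simp]: "coeff (Qt lam n) 0 = 1"
  by (induction lam n rule: Qt.induct) (simp_all add: Let_def)

lemma A_1_diff_Suc_Suc:
  fixes lam :: real and n :: nat
  defines "m \<equiv> real (n + 2)"
  defines "c \<equiv> m * (2*m - 1) * (2*m + lam) / ((m - 1 + lam) * (2*m - 2 + lam) * (2*m - 1 + 2*lam))"
    and "d \<equiv> 2 * m * (2*m - 1 + lam) * (2*m + lam) / (2*m - 1 + 2*lam)"
  shows "A lam 1 (Suc (Suc n)) - A lam 1 (Suc n) = c * (A lam 1 (Suc n) - A lam 1 n) + d"
proof -
  have "Q lam (Suc (Suc n))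
      = Q lam (Suc n) + smult c (Q lam (Suc n) - Q lam n) - smult d (pCons 0 (Q lam (Suc n)))"
    unfolding c_def d_def m_def by (simp only: Q.simps Let_def)
  then have "coeff (Q lam (Suc (Suc n))) 1
      = coeff (Q lam (Suc n)) 1 + c * (coeff (Q lam (Suc n)) 1 - coeff (Q lam n) 1) - d"
    by (simp add: coeff_pCons del: Q.simps)
  then show ?thesis by (simp add: A_def algebra_simps del: Q.simps)
qed

lemma At_1_diff_Suc_Suc:
  fixes lam :: real and n :: nat
  defines "m \<equiv> real (n + 2)"
  defines "c \<equiv> (m - 1) * (2*m - 1) * (2*m - 1 + lam) / ((m - 1 + lam) * (2*m - 3 + lam) * (2*m - 3 + 2*lam))"
    and "d \<equiv> (2*m - 1) * (2*m - 2 + lam) * (2*m - 1 + lam) / (2 * (m - 1 + lam))"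
  shows "At lam 1 (Suc (Suc n)) - At lam 1 (Suc n) = c * (At lam 1 (Suc n) - At lam 1 n) + d"
proof -
  have "Qt lam (Suc (Suc n))
      = Qt lam (Suc n) + smult c (Qt lam (Suc n) - Qt lam n) - smult d (pCons 0 (Qt lam (Suc n)))"
    unfolding c_def d_def m_def by (simp only: Qt.simps Let_def)
  then have "coeff (Qt lam (Suc (Suc n))) 1
      = coeff (Qt lam (Suc n)) 1 + c * (coeff (Qt lam (Suc n)) 1 - coeff (Qt lam n) 1) - d"
    by (simp add: coeff_pCons del: Qt.simps)
  then show ?thesis by (simp add: At_def algebra_simps del: Qt.simps)
qed

lemma A_1_diff_eq_A1_increment:
  fixes lam :: real
  assumes "lam > - 1 / 2"
  shows "A lam 1 (Suc n) - A lam 1 n = A1_increment lam (real (Suc n))"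
proof (induction n)
  case 0
  have "2 * lam + 1 \<noteq> 0" using assms by linarith
  then show ?case by (simp add: A_def A1_increment_def field_simps)
next
  case (Suc n)
  have "real (Suc (Suc n)) = real (n + 2)" "real (n + 2) - 1 = real (Suc n)" "2 \<le> real (n + 2)"
    by simp_all
  then show ?case
    using A1_increment_recurrence[OF assms, of "real (n + 2)"]
    by (simp only: A_1_diff_Suc_Suc Suc)
qed

lemma At_1_diff_eq_At1_increment:
  fixes lam :: real
  assumes "lam > - 1 / 2"
  shows "At lam 1 (Suc n) - At lam 1 n = At1_increment lam (real (Suc n))"
proof (induction n)
  case 0
  have "2 * lam + 1 \<noteq> 0" using assms by linarith
  then show ?case by (simp add: At_def At1_increment_def field_simps)
next
  case (Suc n)
  have "real (Suc (Suc n)) = real (n + 2)" "real (n + 2) - 1 = real (Suc n)" "2 \<le> real (n + 2)"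
    by simp_all
  then show ?case
    using At1_increment_recurrence[OF assms, of "real (n + 2)"]
    by (simp only: At_1_diff_Suc_Suc Suc)
qed

lemma A_1_closed_form:
  fixes lam :: real
  assumes "lam > - 1 / 2"
  shows "A lam 1 n = real n * (real n + 1) * (real n + lam) * (real n + lam + 1) / (2 * lam + 1)"
proof (induction n)
  case 0
  show ?case by (simp add: A_def)
next
  case (Suc n)
  have "2 * lam + 1 \<noteq> 0" using assms by linarith
  with A_1_diff_eq_A1_increment[OF assms, of n] Suc.IH show ?case
    by (simp add: A1_increment_def field_simps)
qed

lemma At_1_closed_form:
  fixes lam :: real
  assumes "lam > - 1 / 2"
  shows "At lam 1 n = real n * (real n + lam) * ((real n)\<^sup>2 + lam * real n - 1 / 2) / (2 * lam + 1)"
proof (induction n)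
  case 0
  show ?case by (simp add: At_def)
next
  case (Suc n)
  have "2 * lam + 1 \<noteq> 0" using assms by linarith
  with At_1_diff_eq_At1_increment[OF assms, of n] Suc.IH show ?case
    by (simp add: At1_increment_def field_simps power2_eq_square)
qed

theorem lemma3p1:
  fixes lam :: real and m :: nat
  assumes "lam > - 1 / 2"
  shows "A lam 1 m = real m * (real m + 1) * (real m + lam) * (real m + lam + 1) / (2 * lam + 1)
       \<and> At lam 1 m = real m * (real m + lam) * ((real m)\<^sup>2 + lam * real m - 1 / 2) / (2 * lam + 1)"
  using A_1_closed_form[OF assms] At_1_closed_form[OF assms] by blast

end
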